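(* Let ${\mathcal M}$ be a $q$-matroid on $\mathbb{F}_q^n$. If ${\mathcal M}$ is the uniform $q$-matroid $U(n,n)$ (i.e. $\rho(X)=\dim X$ for every subspace $X$), then $\chi(I_{{\mathcal M}})=0$; for every other $q$-matroid ${\mathcal M}$ on $\mathbb{F}_q^n$, $\chi(I_{{\mathcal M}})\neq0$.
   Context: A $q$-matroid is a pair $(E,\rho)$, $E=\mathbb{F}_q^n$, with $\rho$ from subspaces to $\mathbb{Z}_{\ge0}$ satisfying $0\le\rho(X)\le\dim X$, monotonicity, and $\rho(X+Y)+\rho(X\cap Y)\le\rho(X)+\rho(Y)$. A subspace $U$ is independent if $\rho(U)=\dim U$. The order complex $I_{{\mathcal M}}$ is the simplicial complex whose faces are the chains $V_1\subsetneq\cdots\subsetneq V_k$ ($k\ge0$, empty chain included) of nonzero independent subspaces, and $\chi(I_{{\mathcal M}})=\sum_{k\ge0}(-1)^{k-1}f_k$, where $f_k$ is the number of such chains with $k$ members. *)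

theory Defs
  imports "HOL-Analysis.Analysis"
begin

text \<open>Ground space E = F_q^n is modelled as the type 'a^'n, where 'a is a finite field
(q = CARD('a)) and n = CARD('n).\<close>

definition qsubspaces :: "('a::{finite,field}^'n) set set" where
  "qsubspaces = {X. vec.subspace X}"

definition subspace_sum :: "('a::field^'n) set \<Rightarrow> ('a^'n) set \<Rightarrow> ('a^'n) set" where
  "subspace_sum X Y = {x + y | x y. x \<in> X \<and> y \<in> Y}"

definition q_matroid :: "(('a::{finite,field}^'n) set \<Rightarrow> nat) \<Rightarrow> bool" where
  "q_matroid \<rho> \<longleftrightarrow>
     (\<forall>X. vec.subspace X \<longrightarrow> \<rho> X \<le> vec.dim X) \<and>
     (\<forall>X Y. vec.subspace X \<and> vec.subspace Y \<and> X \<subseteq> Y \<longrightarrow> \<rho> X \<le> \<rho> Y) \<and>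
     (\<forall>X Y. vec.subspace X \<and> vec.subspace Y \<longrightarrow>
        \<rho> (subspace_sum X Y) + \<rho> (X \<inter> Y) \<le> \<rho> X + \<rho> Y)"

definition q_independent :: "(('a::{finite,field}^'n) set \<Rightarrow> nat) \<Rightarrow> ('a^'n) set \<Rightarrow> bool" where
  "q_independent \<rho> U \<longleftrightarrow> vec.subspace U \<and> \<rho> U = vec.dim U"

definition uniform_full :: "(('a::{finite,field}^'n) set \<Rightarrow> nat) \<Rightarrow> bool" where
  "uniform_full \<rho> \<longleftrightarrow> (\<forall>X. vec.subspace X \<longrightarrow> \<rho> X = vec.dim X)"

text \<open>Faces of the order complex: finite sets of nonzero independent subspaces that are
totally ordered by strict inclusion (a chain V_1 \<subset> ... \<subset> V_k, k = card C; the empty chain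
is included).\<close>
definition indep_chains :: "(('a::{finite,field}^'n) set \<Rightarrow> nat) \<Rightarrow> ('a^'n) set set set" where
  "indep_chains \<rho> = {C. C \<subseteq> {U. q_independent \<rho> U \<and> U \<noteq> {0}} \<and>
        (\<forall>U\<in>C. \<forall>V\<in>C. U \<subseteq> V \<or> V \<subseteq> U)}"

definition face_count :: "(('a::{finite,field}^'n) set \<Rightarrow> nat) \<Rightarrow> nat \<Rightarrow> nat" where
  "face_count \<rho> k = card {C \<in> indep_chains \<rho>. card C = k}"

text \<open>chi = sum_{k>=0} (-1)^(k-1) f_k; f_k = 0 for k > card of the set of all subspaces.\<close>
definition euler_char :: "(('a::{finite,field}^'n) set \<Rightarrow> nat) \<Rightarrow> int" where
  "euler_char \<rho> = (\<Sum>k\<in>{0..card (qsubspaces :: ('a^'n) set set)}.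
                       - ((-1) ^ k) * int (face_count \<rho> k))"

end

theory Submission
  imports Defs
begin

text \<open>Grouping the chains of nonzero independent subspaces by their top element and invoking
  Philip Hall's theorem turns \<open>-\<chi>\<close> into the sum of the M\<ouml>bius function \<open>\<mu>(0, U)\<close> of the
  subspace lattice over all independent subspaces \<open>U\<close> (independence is hereditary), and
  \<open>\<mu>(0, U) = (-1)^d q^(d choose 2)\<close> for \<open>dim U = d\<close>. For \<open>U(n,n)\<close> this is the sum of
  \<open>\<mu>(0, -)\<close> over the whole lattice, which is zero. Otherwise the rank \<open>r\<close> of the q-matroid is
  less than \<open>n\<close>; if \<open>i_d\<close> counts the independent subspaces of dimension \<open>d\<close>, double counting
  the pairs (\<open>U\<close>, \<open>v\<close>) with \<open>v\<close> outside the closure of \<open>U\<close> shows that \<open>q^(d choose 2) i_d\<close>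
  strictly increases for \<open>d \<le> r\<close>, and an alternating sum of a strictly increasing positive
  sequence is nonzero.\<close>

section \<open>Counting subspaces over a finite field\<close>

lemma span_subspace_eq [simp]:
  fixes S :: "('a::field^'n) set"
  shows "vec.subspace S \<Longrightarrow> vec.span S = S"
  by simp

lemma dim_span_insert:
  fixes y :: "('a::field^'n) set"
  assumes "vec.subspace y" and "u \<notin> y"
  shows "vec.dim (vec.span (insert u y)) = Suc (vec.dim y)"
  using assms by (simp add: vec.dim_insert)

lemma span_insert_eq_of_dim:
  fixes y :: "('a::field^'n) set"
  assumes "vec.subspace y" "vec.subspace z" "y \<subseteq> z" "u \<in> z" "u \<notin> y"
    and "vec.dim z = Suc (vec.dim y)"
  shows "vec.span (insert u y) = z"
proof (rule vec.subspace_dim_equal)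
  show "vec.span (insert u y) \<subseteq> z"
    using assms by (simp add: vec.span_minimal)
  show "vec.dim z \<le> vec.dim (vec.span (insert u y))"
    using dim_span_insert[of y u] assms by simp
qed (use assms in simp_all)

lemma card_span_independent:
  fixes B :: "('a::{finite,field}^'n) set"
  assumes "vec.independent B"
  shows "card (vec.span B) = CARD('a) ^ card B"
proof -
  define comb where "comb c = (\<Sum>b\<in>B. c b *s b)" for c :: "'a^'n \<Rightarrow> 'a"
  have "inj_on comb (B \<rightarrow>\<^sub>E UNIV)"
  proof (rule inj_onI)
    fix c d assume c: "c \<in> B \<rightarrow>\<^sub>E UNIV" and d: "d \<in> B \<rightarrow>\<^sub>E UNIV" and "comb c = comb d"
    have unique: "\<forall>b\<in>B. e b = 0" if "(\<Sum>b\<in>B. e b *s b) = 0" for e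
      using assms that vec.dependent_finite[of B] by auto
    have "(\<Sum>b\<in>B. (c b - d b) *s b) = 0"
      using \<open>comb c = comb d\<close> by (simp add: comb_def vector_sub_rdistrib sum_subtractf)
    then have "\<forall>b\<in>B. c b - d b = 0" by (rule unique)
    then show "c = d" using c d by (auto intro: PiE_ext)
  qed
  moreover have "comb ` (B \<rightarrow>\<^sub>E UNIV) = vec.span B"
  proof -
    have "comb u \<in> comb ` (B \<rightarrow>\<^sub>E UNIV)" for u
      by (rule image_eqI[where x="restrict u B"]) (simp_all add: comb_def)
    then have "comb ` (B \<rightarrow>\<^sub>E UNIV) = range comb" by auto
    then show ?thesis by (simp add: comb_def vec.span_finite)
  qed
  ultimately have "card (vec.span B) = card (B \<rightarrow>\<^sub>E (UNIV :: 'a set))"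
    by (metis card_image)
  then show ?thesis by (simp add: card_PiE)
qed

lemma card_subspace:
  fixes S :: "('a::{finite,field}^'n) set"
  assumes "vec.subspace S"
  shows "card S = CARD('a) ^ vec.dim S"
proof -
  obtain B where "vec.independent B" "vec.span B = S" "card B = vec.dim S"
    using vec.basis_subspace_exists[OF assms] by metis
  then show ?thesis using card_span_independent by metis
qed

lemma two_le_card_field: "2 \<le> CARD('a::{finite,field})"
proof -
  have "card {0::'a, 1} \<le> CARD('a)" by (rule card_mono) simp_all
  then show ?thesis by simp
qed

lemma scale_mem_subspace_iff:
  fixes S :: "('a::field^'n) set"
  assumes "vec.subspace S" and "c \<noteq> 0"
  shows "c *s x \<in> S \<longleftrightarrow> x \<in> S"
proof
  assume "c *s x \<in> S"
  then have "inverse c *s (c *s x) \<in> S" by (rule vec.subspace_scale[OF assms(1)])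
  then show "x \<in> S" using assms(2) by simp
qed (simp add: vec.subspace_scale assms(1))

definition line_complements :: "'a::field^'n \<Rightarrow> ('a^'n) set \<Rightarrow> ('a^'n) set set" where
  "line_complements u z = {y. vec.subspace y \<and> y \<subseteq> z \<and> u \<notin> y \<and> vec.dim z = Suc (vec.dim y)}"

text \<open>The complements of the line through \<open>u\<close> in \<open>span (insert u B)\<close> are the graphs of the
  linear maps \<open>span B \<rightarrow> span {u}\<close>; the graph of the map sending \<open>b \<in> B\<close> to \<open>g b *s u\<close> is
  spanned by the sheared basis vectors \<open>b + g b *s u\<close>.\<close>

definition shear_span :: "'a::field^'n \<Rightarrow> ('a^'n) set \<Rightarrow> ('a^'n \<Rightarrow> 'a) \<Rightarrow> ('a^'n) set" where
  "shear_span u B g = vec.span ((\<lambda>b. b + g b *s u) ` B)"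

context
  fixes u :: "'a::field^'n" and B :: "('a^'n) set"
  assumes independent: "vec.independent (insert u B)" and u_notin: "u \<notin> B"
begin

lemma dim_span_insert_basis: "vec.dim (vec.span (insert u B)) = Suc (card B)"
proof -
  have "vec.dim (vec.span (insert u B)) = card (insert u B)"
    by (rule vec.dim_span_eq_card_independent[OF independent])
  then show ?thesis using u_notin vec.finiteI_independent[OF independent] by simp
qed

lemma span_insert_shear_span: "vec.span (insert u (shear_span u B g)) = vec.span (insert u B)"
proof -
  let ?S = "(\<lambda>b. b + g b *s u) ` B"
  have "vec.span (insert u ?S) = vec.span (insert u B)"
  proof (unfold vec.span_eq, intro conjI subsetI)
    fix x assume "x \<in> insert u ?S"
    then show "x \<in> vec.span (insert u B)"
      by (auto intro: vec.span_add vec.span_scale vec.span_base)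
  next
    fix x assume x: "x \<in> insert u B"
    show "x \<in> vec.span (insert u ?S)"
    proof (cases "x = u")
      case False
      then have "(x + g x *s u) - g x *s u \<in> vec.span (insert u ?S)"
        using x by (intro vec.span_diff vec.span_scale vec.span_base) auto
      then show ?thesis by simp
    qed (simp add: vec.span_base)
  qed
  moreover have "vec.span (insert u (vec.span ?S)) = vec.span (insert u ?S)"
  proof (intro vec.span_eq[THEN iffD2] conjI)
    show "insert u (vec.span ?S) \<subseteq> vec.span (insert u ?S)"
      using vec.span_mono[of ?S "insert u ?S"] by (auto intro: vec.span_base)
    show "insert u ?S \<subseteq> vec.span (insert u (vec.span ?S))"
      using vec.span_superset[of ?S] by (auto intro: vec.span_base)
  qed
  ultimately show ?thesis by (simp add: shear_span_def)
qed

lemma dim_shear_span_le: "vec.dim (shear_span u B g) \<le> card B"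
proof -
  have "finite B" using vec.finiteI_independent[OF independent] by simp
  then have "vec.dim ((\<lambda>b. b + g b *s u) ` B) \<le> card ((\<lambda>b. b + g b *s u) ` B)"
    by (intro vec.dim_le_card vec.span_superset) simp
  also have "\<dots> \<le> card B" using \<open>finite B\<close> by (rule card_image_le)
  finally show ?thesis by (simp add: shear_span_def)
qed

lemma notin_shear_span: "u \<notin> shear_span u B g"
proof
  assume "u \<in> shear_span u B g"
  then have "vec.span (insert u (shear_span u B g)) = shear_span u B g"
    by (simp add: vec.span_redundant vec.span_span shear_span_def)
  then have "vec.dim (vec.span (insert u B)) = vec.dim (shear_span u B g)"
    by (simp only: span_insert_shear_span)
  then show False using dim_span_insert_basis dim_shear_span_le[of g] by simp
qed

lemma shear_span_in_line_complements:
  "shear_span u B g \<in> line_complements u (vec.span (insert u B))"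
proof -
  have "u \<notin> vec.span (shear_span u B g)"
    using notin_shear_span by (simp add: vec.span_span shear_span_def)
  have "vec.dim (vec.span (insert u B)) = vec.dim (insert u (shear_span u B g))"
    by (simp flip: span_insert_shear_span[of g])
  also have "\<dots> = Suc (vec.dim (shear_span u B g))"
    using \<open>u \<notin> vec.span (shear_span u B g)\<close> by (simp add: vec.dim_insert)
  finally have "vec.dim (vec.span (insert u B)) = Suc (vec.dim (shear_span u B g))" .
  moreover have "shear_span u B g \<subseteq> vec.span (insert u B)"
    using vec.span_superset[of "insert u (shear_span u B g)"] span_insert_shear_span[of g]
    by auto
  ultimately show ?thesis
    using notin_shear_span by (simp add: line_complements_def shear_span_def)
qed

lemma inj_on_shear_span: "inj_on (shear_span u B) (B \<rightarrow>\<^sub>E UNIV)"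
proof (rule inj_onI)
  fix g h assume g: "g \<in> B \<rightarrow>\<^sub>E UNIV" and h: "h \<in> B \<rightarrow>\<^sub>E UNIV"
    and eq: "shear_span u B g = shear_span u B h"
  show "g = h"
  proof (rule PiE_ext[OF g h])
    fix b assume "b \<in> B"
    then have "b + g b *s u \<in> shear_span u B g" "b + h b *s u \<in> shear_span u B h"
      by (auto simp: shear_span_def intro: vec.span_base)
    then have "(b + g b *s u) - (b + h b *s u) \<in> shear_span u B g"
      using eq vec.span_diff by (metis shear_span_def)
    then have "(g b - h b) *s u \<in> shear_span u B g"
      by (simp add: vector_sub_rdistrib)
    then show "g b = h b"
      using notin_shear_span scale_mem_subspace_iff[of "shear_span u B g" "g b - h b" u]
      by (auto simp: shear_span_def)
  qed
qed

lemma line_complement_is_shear_span: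
  assumes "y \<in> line_complements u (vec.span (insert u B))"
  shows "\<exists>g\<in>B \<rightarrow>\<^sub>E UNIV. shear_span u B g = y"
proof -
  have y: "vec.subspace y" "y \<subseteq> vec.span (insert u B)" "u \<notin> y"
    and dim_y: "vec.dim y = card B"
    using assms dim_span_insert_basis by (auto simp: line_complements_def)
  have "vec.span (insert u y) = vec.span (insert u B)"
    using assms by (intro span_insert_eq_of_dim) (auto simp: line_complements_def vec.span_base)
  have shift_exists: "\<exists>k. b - k *s u \<in> y" if "b \<in> B" for b
  proof -
    have "b \<in> vec.span (insert u y)"
      using that \<open>vec.span (insert u y) = vec.span (insert u B)\<close> by (auto intro: vec.span_base)
    then obtain k where "b - k *s u \<in> vec.span y" using vec.span_breakdown_eq by blast
    then show ?thesis using y(1) by (metis vec.span_eq_iff)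
  qed
  have shift: "b - (SOME k. b - k *s u \<in> y) *s u \<in> y" if "b \<in> B" for b
    using someI_ex[OF shift_exists[OF that]] .
  define g where "g = (\<lambda>b\<in>B. - (SOME k. b - k *s u \<in> y))"
  have "shear_span u B g \<subseteq> y"
    unfolding shear_span_def using shift y(1) by (intro vec.span_minimal) (auto simp: g_def)
  then have "shear_span u B g = y"
    using y(1) dim_y dim_span_insert_basis shear_span_in_line_complements[of g]
    by (intro vec.subspace_dim_equal) (auto simp: line_complements_def)
  then show ?thesis by (auto simp: g_def)
qed

end

lemma card_line_complements_span_insert:
  fixes u :: "'a::{finite,field}^'n"
  assumes "vec.independent (insert u B)" and "u \<notin> B"
  shows "card (line_complements u (vec.span (insert u B))) = CARD('a) ^ card B"
proof -
  have "line_complements u (vec.span (insert u B)) = shear_span u B ` (B \<rightarrow>\<^sub>E UNIV)"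
    using shear_span_in_line_complements[OF assms] line_complement_is_shear_span[OF assms] by blast
  then show ?thesis
    using inj_on_shear_span[OF assms] by (simp add: card_image card_PiE)
qed

lemma card_line_complements:
  fixes z :: "('a::{finite,field}^'n) set"
  assumes "vec.subspace z" "u \<in> z" "u \<noteq> 0" and "vec.dim z = Suc j"
  shows "card (line_complements u z) = CARD('a) ^ j"
proof -
  obtain B' where "u \<in> B'" "B' \<subseteq> z" "vec.independent B'" "z \<subseteq> vec.span B'"
    using vec.maximal_independent_subset_extend[of "{u}" z] assms(2,3)
    by (auto simp: vec.independent_insert)
  moreover define B where "B = B' - {u}"
  ultimately have "insert u B = B'" "u \<notin> B" "vec.span B' = z" "vec.independent B'"
    using vec.span_subspace assms(1) by auto
  moreover have "card B = j"
    using dim_span_insert_basis[of u B] assms(4) calculation by simp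
  ultimately show ?thesis using card_line_complements_span_insert[of u B] by simp
qed

lemma span_insert_eq_iff_line_complement:
  fixes y :: "('a::field^'n) set"
  assumes "vec.subspace z" "u \<in> z" "vec.subspace y" "u \<notin> y"
  shows "vec.span (insert u y) = z \<longleftrightarrow> y \<in> line_complements u z"
proof
  assume "vec.span (insert u y) = z"
  moreover have "y \<subseteq> vec.span (insert u y)" by (auto intro: vec.span_base)
  ultimately show "y \<in> line_complements u z"
    using assms dim_span_insert[of y u] by (auto simp: line_complements_def)
next
  assume "y \<in> line_complements u z"
  then show "vec.span (insert u y) = z"
    using assms by (intro span_insert_eq_of_dim) (auto simp: line_complements_def)
qed

lemma card_line_complement_pairs:
  fixes x :: "('a::{finite,field}^'n) set"
  assumes "vec.subspace x" and "vec.dim x = Suc k"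
  shows "card (SIGMA v:x - {0}. line_complements v x) = (CARD('a) ^ Suc k - 1) * CARD('a) ^ k"
proof -
  have "card (SIGMA v:x - {0}. line_complements v x) = (\<Sum>v\<in>x - {0}. CARD('a) ^ k)"
    using card_line_complements[OF assms(1) _ _ assms(2)] by (simp add: card_SigmaI)
  also have "\<dots> = (CARD('a) ^ Suc k - 1) * CARD('a) ^ k"
    using card_subspace[OF assms(1)] assms vec.subspace_0[OF assms(1)]
    by (simp add: card_Diff_singleton)
  finally show ?thesis .
qed

section \<open>Chains and the M\<ouml>bius function\<close>

definition signed_chain_count :: "'b set set \<Rightarrow> int" where
  "signed_chain_count A = (\<Sum>C\<in>chains A. (-1) ^ card C)"

lemma finite_chains: "finite A \<Longrightarrow> finite (chains A)"
  unfolding chains_def by (rule finite_subset[of _ "Pow A"]) auto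

lemma chains_with_top:
  assumes "finite A" and "x \<in> A"
  shows "{C \<in> chains A. C \<noteq> {} \<and> \<Union>C = x} = insert x ` chains {y \<in> A. y \<subset> x}"
proof (intro equalityI subsetI)
  fix C assume "C \<in> {C \<in> chains A. C \<noteq> {} \<and> \<Union>C = x}"
  then have C: "C \<in> chains A" "C \<noteq> {}" "\<Union>C = x" by auto
  then have "finite C" using assms(1) by (auto simp: chains_def intro: finite_subset)
  then have "x \<in> C"
    using C Union_in_chain[of C A] by (auto simp: chains_alt_def)
  moreover have "C - {x} \<in> chains {y \<in> A. y \<subset> x}"
    using C by (auto simp: chains_def chain_subset_def)
  ultimately show "C \<in> insert x ` chains {y \<in> A. y \<subset> x}"
    by (auto intro: image_eqI[where x="C - {x}"])
next
  fix C assume "C \<in> insert x ` chains {y \<in> A. y \<subset> x}"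
  then show "C \<in> {C \<in> chains A. C \<noteq> {} \<and> \<Union>C = x}"
    using assms(2) by (auto simp: chains_def chain_subset_def)
qed

lemma signed_chain_count_by_top:
  assumes "finite A"
  shows "signed_chain_count A = 1 - (\<Sum>x\<in>A. signed_chain_count {y \<in> A. y \<subset> x})"
proof -
  have chains_fin: "finite (chains A)" using assms by (rule finite_chains)
  have top: "\<Union>C \<in> A" if "C \<in> chains A - {{}}" for C
  proof -
    have "finite C" using that assms by (auto simp: chains_def intro: finite_subset)
    then show ?thesis
      using that Union_in_chain[of C A] by (auto simp: chains_alt_def subset_chain_def)
  qed
  have "{} \<in> chains A" by (simp add: chains_def chain_subset_def)
  then have "signed_chain_count A = 1 + (\<Sum>C\<in>chains A - {{}}. (-1) ^ card C)"
    unfolding signed_chain_count_def using chains_fin by (simp add: sum.remove)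
  also have "(\<Sum>C\<in>chains A - {{}}. (-1::int) ^ card C)
      = (\<Sum>x\<in>A. \<Sum>C\<in>{C \<in> chains A - {{}}. \<Union>C = x}. (-1) ^ card C)"
    using chains_fin assms top by (intro sum.group[symmetric]) auto
  also have "\<dots> = (\<Sum>x\<in>A. - signed_chain_count {y \<in> A. y \<subset> x})"
  proof (rule sum.cong[OF refl])
    fix x assume x: "x \<in> A"
    let ?B = "{y \<in> A. y \<subset> x}"
    have "inj_on (insert x) (chains ?B)"
      by (rule inj_onI) (auto simp: chains_def)
    moreover have "card (insert x C) = Suc (card C)" if "C \<in> chains ?B" for C
      using that assms by (auto simp: chains_def intro!: card_insert_disjoint finite_subset[of C A])
    ultimately have "(\<Sum>C\<in>insert x ` chains ?B. (-1::int) ^ card C) = - signed_chain_count ?B"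
      by (simp add: sum.reindex signed_chain_count_def sum_negf)
    moreover have "{C \<in> chains A - {{}}. \<Union>C = x} = insert x ` chains ?B"
      using chains_with_top[OF assms x] by auto
    ultimately show "(\<Sum>C\<in>{C \<in> chains A - {{}}. \<Union>C = x}. (-1) ^ card C) = - signed_chain_count ?B"
      by simp
  qed
  finally show ?thesis by (simp add: sum_negf)
qed

text \<open>Philip Hall's theorem, taken as the definition of the M\<ouml>bius function \<open>\<mu>(b, x)\<close> of
  the poset \<open>L\<close>; the defining recursion of \<open>\<mu>\<close> then becomes a theorem.\<close>

definition mobius :: "'b set set \<Rightarrow> 'b set \<Rightarrow> 'b set \<Rightarrow> int" where
  "mobius L b x = (if x = b then 1 else - signed_chain_count {y \<in> L. b \<subset> y \<and> y \<subset> x})"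

lemma signed_chain_count_down_closed:
  assumes "finite L" and "A \<subseteq> {y \<in> L. b \<subset> y}"
    and "\<And>x y. x \<in> A \<Longrightarrow> y \<in> L \<Longrightarrow> b \<subset> y \<Longrightarrow> y \<subset> x \<Longrightarrow> y \<in> A"
  shows "signed_chain_count A = (\<Sum>x\<in>insert b A. mobius L b x)"
proof -
  have "finite A" using assms(2) by (rule finite_subset) (simp add: assms(1))
  have "{y \<in> A. y \<subset> x} = {y \<in> L. b \<subset> y \<and> y \<subset> x}" if "x \<in> A" for x
    using that assms(2,3) by blast
  moreover have "mobius L b x = - signed_chain_count {y \<in> L. b \<subset> y \<and> y \<subset> x}" if "x \<in> A" for x
    using that assms(2) by (auto simp: mobius_def)
  ultimately have "(\<Sum>x\<in>A. signed_chain_count {y \<in> A. y \<subset> x}) = - (\<Sum>x\<in>A. mobius L b x)"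
    by (simp add: sum_negf)
  moreover have "b \<notin> A" using assms(2) by auto
  ultimately show ?thesis
    using signed_chain_count_by_top[OF \<open>finite A\<close>] \<open>finite A\<close> by (simp add: mobius_def)
qed

lemma mobius_interval_sum:
  assumes "finite L" and "b \<in> L" "x \<in> L" "b \<subset> x"
  shows "(\<Sum>y\<in>{y \<in> L. b \<subseteq> y \<and> y \<subseteq> x}. mobius L b y) = 0"
proof -
  let ?A = "{y \<in> L. b \<subset> y \<and> y \<subset> x}"
  have "{y \<in> L. b \<subseteq> y \<and> y \<subseteq> x} = insert x (insert b ?A)"
    using assms by auto
  moreover have "signed_chain_count ?A = (\<Sum>y\<in>insert b ?A. mobius L b y)"
    by (rule signed_chain_count_down_closed) (use assms in auto)
  moreover have "finite ?A" using assms(1) by simp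
  ultimately show ?thesis using assms(4) by (simp add: mobius_def)
qed

abbreviation subspace_mobius :: "('a::{finite,field}^'n) set \<Rightarrow> int" where
  "subspace_mobius \<equiv> mobius (Collect vec.subspace) {0}"

definition q_mobius :: "nat \<Rightarrow> nat \<Rightarrow> int" where
  "q_mobius q d = (-1) ^ d * int q ^ (d choose 2)"

lemma q_mobius_0 [simp]: "q_mobius q 0 = 1"
  by (simp add: q_mobius_def numeral_2_eq_2)

lemma q_mobius_Suc: "q_mobius q (Suc d) = - (int q ^ d * q_mobius q d)"
  by (simp add: q_mobius_def numeral_2_eq_2 power_add)

lemma sum_line_complements_q_mobius:
  fixes z :: "('a::{finite,field}^'n) set"
  assumes "vec.subspace z" "u \<in> z" "u \<noteq> 0"
  shows "(\<Sum>y\<in>line_complements u z. q_mobius CARD('a) (vec.dim y)) = - q_mobius CARD('a) (vec.dim z)"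
proof -
  have "vec.dim z \<noteq> 0" using assms(2,3) by auto
  then obtain j where j: "vec.dim z = Suc j" using not0_implies_Suc by blast
  then have "(\<Sum>y\<in>line_complements u z. q_mobius CARD('a) (vec.dim y))
      = (\<Sum>y\<in>line_complements u z. q_mobius CARD('a) j)"
    by (intro sum.cong) (auto simp: line_complements_def)
  also have "\<dots> = int (CARD('a) ^ j) * q_mobius CARD('a) j"
    using card_line_complements[OF assms j] by simp
  finally show ?thesis using j by (simp add: q_mobius_Suc)
qed

lemma proper_subspaces_q_mobius_sum:
  fixes x :: "('a::{finite,field}^'n) set"
  assumes x: "vec.subspace x" "x \<noteq> {0}"
  shows "(\<Sum>y\<in>{y. vec.subspace y \<and> y \<subset> x}. q_mobius CARD('a) (vec.dim y))
    = - q_mobius CARD('a) (vec.dim x)"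
proof -
  let ?w = "\<lambda>y. q_mobius CARD('a) (vec.dim y)"
  obtain u where u: "u \<in> x" "u \<noteq> (0::'a^'n)"
    using x vec.subspace_0 by blast
  txt \<open>Split the proper subspaces by whether they contain \<open>u\<close>. Those avoiding \<open>u\<close> are the
    complements of the line through \<open>u\<close> in \<open>x\<close> or in some proper \<open>z \<ni> u\<close>; by
    \<open>sum_line_complements_q_mobius\<close> the complements in \<open>z\<close> cancel the weight of \<open>z\<close>.\<close>
  define avoid where "avoid = {y. vec.subspace y \<and> y \<subseteq> x \<and> u \<notin> y}"
  define contain where "contain = {z. vec.subspace z \<and> z \<subset> x \<and> u \<in> z}"
  define small where "small = {y \<in> avoid. vec.span (insert u y) \<noteq> x}"
  have "line_complements u x = {y \<in> avoid. vec.span (insert u y) = x}"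
    using span_insert_eq_iff_line_complement[OF x(1) u(1)]
    by (auto simp: avoid_def line_complements_def)
  then have "avoid = line_complements u x \<union> small" "line_complements u x \<inter> small = {}"
    by (auto simp: small_def)
  then have avoid_sum: "sum ?w avoid = - ?w x + sum ?w small"
    using sum_line_complements_q_mobius[OF x(1) u] by (simp add: sum.union_disjoint)
  have fiber: "{y \<in> small. vec.span (insert u y) = z} = line_complements u z" if "z \<in> contain" for z
    using that span_insert_eq_iff_line_complement[of z u]
    by (auto simp: contain_def small_def avoid_def line_complements_def)
  have "vec.span (insert u y) \<in> contain" if "y \<in> small" for y
  proof -
    have "vec.span (insert u y) \<subseteq> x"
      using that x(1) u(1) by (intro vec.span_minimal) (auto simp: small_def avoid_def)
    then show ?thesis using that by (auto simp: contain_def small_def vec.span_base)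
  qed
  then have "sum ?w small = (\<Sum>z\<in>contain. \<Sum>y\<in>{y \<in> small. vec.span (insert u y) = z}. ?w y)"
    by (intro sum.group[symmetric]) auto
  also have "\<dots> = (\<Sum>z\<in>contain. - ?w z)"
    using fiber sum_line_complements_q_mobius[of _ u] u(2) by (simp add: contain_def)
  also have "\<dots> = - sum ?w contain"
    by (simp add: sum_negf)
  finally have "sum ?w avoid + sum ?w contain = - ?w x"
    using avoid_sum by simp
  moreover have "{y. vec.subspace y \<and> y \<subset> x} = avoid \<union> contain" "avoid \<inter> contain = {}"
    using u(1) by (auto simp: avoid_def contain_def)
  ultimately show ?thesis by (simp add: sum.union_disjoint)
qed

lemma subspace_mobius_eq:
  fixes x :: "('a::{finite,field}^'n) set"
  assumes "vec.subspace x"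
  shows "subspace_mobius x = q_mobius CARD('a) (vec.dim x)"
  using assms
proof (induction "vec.dim x" arbitrary: x rule: less_induct)
  case less
  show ?case
  proof (cases "x = {0}")
    case True
    then show ?thesis by (simp add: mobius_def)
  next
    case False
    let ?proper = "{y. vec.subspace y \<and> y \<subset> x}"
    have IH: "subspace_mobius y = q_mobius CARD('a) (vec.dim y)" if "y \<in> ?proper" for y
    proof -
      have "vec.dim y < vec.dim x"
        using that less.prems by (metis mem_Collect_eq vec.dim_psubset vec.span_eq_iff)
      then show ?thesis using less.hyps that by simp
    qed
    have "{y \<in> Collect vec.subspace. {0} \<subseteq> y \<and> y \<subseteq> x} = insert x ?proper"
      using less.prems vec.subspace_0 by auto
    moreover have "{0} \<subset> x" using less.prems False vec.subspace_0 by blast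
    ultimately have "0 = (\<Sum>y\<in>insert x ?proper. subspace_mobius y)"
      using mobius_interval_sum[of "Collect vec.subspace" "{0}" x] less.prems by simp
    also have "\<dots> = subspace_mobius x + (\<Sum>y\<in>?proper. q_mobius CARD('a) (vec.dim y))"
      using IH by simp
    also have "\<dots> = subspace_mobius x - q_mobius CARD('a) (vec.dim x)"
      using proper_subspaces_q_mobius_sum[OF less.prems False] by simp
    finally show ?thesis by simp
  qed
qed

section \<open>Rank, independence and closure in q-matroids\<close>

lemma q_matroid_rank_le_dim: "q_matroid \<rho> \<Longrightarrow> vec.subspace X \<Longrightarrow> \<rho> X \<le> vec.dim X"
  unfolding q_matroid_def by blast

lemma q_matroid_rank_mono:
  "q_matroid \<rho> \<Longrightarrow> vec.subspace X \<Longrightarrow> vec.subspace Y \<Longrightarrow> X \<subseteq> Y \<Longrightarrow> \<rho> X \<le> \<rho> Y"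
  unfolding q_matroid_def by blast

lemma subspace_sum_eq_span:
  fixes X :: "('a::field^'n) set"
  assumes "vec.subspace X" "vec.subspace Y"
  shows "subspace_sum X Y = vec.span (X \<union> Y)"
proof -
  have "vec.span X = X" "vec.span Y = Y" using assms by simp_all
  then show ?thesis by (simp only: subspace_sum_def vec.span_Un)
qed

lemma q_matroid_submodular:
  assumes "q_matroid \<rho>" "vec.subspace X" "vec.subspace Y"
  shows "\<rho> (vec.span (X \<union> Y)) + \<rho> (X \<inter> Y) \<le> \<rho> X + \<rho> Y"
  using assms by (simp add: q_matroid_def flip: subspace_sum_eq_span)

lemma rank_span_insert_le:
  assumes "q_matroid \<rho>" and "vec.subspace X"
  shows "\<rho> (vec.span (insert v X)) \<le> \<rho> X + 1"
proof -
  have "vec.span (X \<union> vec.span {v}) = vec.span (insert v X)"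
  proof (intro vec.span_eq[THEN iffD2] conjI)
    show "X \<union> vec.span {v} \<subseteq> vec.span (insert v X)"
      using vec.span_mono[of "{v}" "insert v X"] by (auto intro: vec.span_base)
    show "insert v X \<subseteq> vec.span (X \<union> vec.span {v})"
      using vec.span_superset[of "{v}"] by (auto intro: vec.span_base)
  qed
  moreover have "\<rho> (vec.span {v}) \<le> 1"
    using q_matroid_rank_le_dim[OF assms(1), of "vec.span {v}"] vec.dim_le_card[of "{v}" "{v}"]
    by (simp add: vec.span_superset)
  ultimately show ?thesis
    using q_matroid_submodular[OF assms, of "vec.span {v}"] by simp
qed

lemma rank_add_dim_le:
  assumes "q_matroid \<rho>" and "vec.subspace U" "vec.subspace X" "X \<subseteq> U"
  shows "\<rho> U + vec.dim X \<le> \<rho> X + vec.dim U"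
  using assms(3,4)
proof (induction "vec.dim U - vec.dim X" arbitrary: X)
  case 0
  then have "X = U" using vec.subspace_dim_equal[of X U] assms(2) by simp
  then show ?case by simp
next
  case (Suc k)
  then have "X \<noteq> U" by auto
  with Suc.prems obtain v where v: "v \<in> U" "v \<notin> X" by blast
  let ?X' = "vec.span (insert v X)"
  have "?X' \<subseteq> U" using Suc.prems v assms(2) by (simp add: vec.span_minimal)
  moreover have "vec.dim ?X' = Suc (vec.dim X)" by (rule dim_span_insert[OF Suc.prems(1) v(2)])
  ultimately have "\<rho> U + vec.dim ?X' \<le> \<rho> ?X' + vec.dim U"
    using Suc.hyps(1)[of ?X'] Suc.hyps(2) by simp
  then show ?case
    using rank_span_insert_le[OF assms(1) Suc.prems(1), of v] \<open>vec.dim ?X' = _\<close> by simp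
qed

lemma q_independent_subspace:
  assumes "q_matroid \<rho>" "q_independent \<rho> U" "vec.subspace X" "X \<subseteq> U"
  shows "q_independent \<rho> X"
  using assms rank_add_dim_le[of \<rho> U X] q_matroid_rank_le_dim[of \<rho> X]
  by (fastforce simp: q_independent_def)

lemma uniform_full_iff_rank_UNIV:
  assumes "q_matroid (\<rho> :: ('a::{finite,field}^'n) set \<Rightarrow> nat)"
  shows "uniform_full \<rho> \<longleftrightarrow> \<rho> UNIV = CARD('n)"
proof
  assume "\<rho> UNIV = CARD('n)"
  then have "q_independent \<rho> UNIV" by (simp add: q_independent_def card_cart_basis)
  then show "uniform_full \<rho>"
    using q_independent_subspace[OF assms, of UNIV]
    by (simp add: uniform_full_def q_independent_def)
qed (simp add: uniform_full_def card_cart_basis)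

lemma rank_span_Un_le:
  assumes "q_matroid \<rho>" "vec.subspace y" "vec.subspace X" "vec.subspace Y"
    and "y \<subseteq> X" "y \<subseteq> Y" "\<rho> X \<le> \<rho> y" "\<rho> Y \<le> \<rho> y"
  shows "\<rho> (vec.span (X \<union> Y)) \<le> \<rho> y"
proof -
  have "\<rho> y \<le> \<rho> (X \<inter> Y)"
    using assms by (intro q_matroid_rank_mono) (auto simp: vec.subspace_inter)
  then show ?thesis
    using q_matroid_submodular[OF assms(1,3,4)] assms(7,8) by linarith
qed

definition q_closure :: "(('a::{finite,field}^'n) set \<Rightarrow> nat) \<Rightarrow> ('a^'n) set \<Rightarrow> ('a^'n) set" where
  "q_closure \<rho> y = {v. \<rho> (vec.span (insert v y)) \<le> \<rho> y}"

lemma subset_q_closure: "vec.subspace y \<Longrightarrow> y \<subseteq> q_closure \<rho> y"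
  by (auto simp: q_closure_def vec.span_redundant)

lemma rank_span_Un_q_closure:
  assumes "q_matroid \<rho>" "vec.subspace y" and "S \<subseteq> q_closure \<rho> y"
  shows "\<rho> (vec.span (S \<union> y)) \<le> \<rho> y"
proof -
  have "finite S" by simp
  then show ?thesis using assms(3)
  proof (induction S rule: finite_induct)
    case empty
    then show ?case using assms(2) by simp
  next
    case (insert v S)
    let ?X = "vec.span (S \<union> y)" and ?Y = "vec.span (insert v y)"
    have X: "y \<subseteq> ?X" "\<rho> ?X \<le> \<rho> y"
      using insert vec.span_superset[of "S \<union> y"] by auto
    have Y: "y \<subseteq> ?Y" "\<rho> ?Y \<le> \<rho> y"
      using insert vec.span_superset[of "insert v y"] by (auto simp: q_closure_def)
    have "vec.span (insert v S \<union> y) \<subseteq> vec.span (?X \<union> ?Y)"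
      using vec.span_superset[of "S \<union> y"] vec.span_superset[of "insert v y"]
      by (intro vec.span_mono) blast
    then have "\<rho> (vec.span (insert v S \<union> y)) \<le> \<rho> (vec.span (?X \<union> ?Y))"
      by (intro q_matroid_rank_mono[OF assms(1)]) simp_all
    also have "\<dots> \<le> \<rho> y"
      by (rule rank_span_Un_le[OF assms(1,2)]) (use X Y in simp_all)
    finally show ?case .
  qed
qed

lemma subspace_q_closure:
  assumes "q_matroid \<rho>" "vec.subspace y"
  shows "vec.subspace (q_closure \<rho> y)"
proof -
  have "x \<in> q_closure \<rho> y" if "x \<in> vec.span (q_closure \<rho> y)" for x
  proof -
    let ?S = "vec.span (q_closure \<rho> y \<union> y)"
    have "vec.span (insert x y) \<subseteq> ?S"
      using that vec.span_mono[of "q_closure \<rho> y" "q_closure \<rho> y \<union> y"]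
      by (intro vec.span_minimal) (auto intro: vec.span_base)
    then have "\<rho> (vec.span (insert x y)) \<le> \<rho> ?S"
      using assms(1) by (intro q_matroid_rank_mono) auto
    also have "\<dots> \<le> \<rho> y" using rank_span_Un_q_closure[OF assms] by simp
    finally show ?thesis by (simp add: q_closure_def)
  qed
  then have "vec.span (q_closure \<rho> y) = q_closure \<rho> y"
    using vec.span_superset by blast
  then show ?thesis by (metis vec.span_eq_iff)
qed

lemma q_closure_neq_UNIV:
  assumes "q_matroid \<rho>" "vec.subspace y" "\<rho> y < \<rho> UNIV"
  shows "q_closure \<rho> y \<noteq> UNIV"
  using rank_span_Un_q_closure[OF assms(1,2), of UNIV] assms(3) by auto

lemma card_q_closure_le:
  fixes \<rho> :: "('a::{finite,field}^'n) set \<Rightarrow> nat"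
  assumes "q_matroid \<rho>" "vec.subspace y" "\<rho> y < \<rho> UNIV"
  shows "card (q_closure \<rho> y) \<le> CARD('a) ^ (CARD('n) - 1)"
proof -
  have "vec.dim (q_closure \<rho> y) < CARD('n)"
    using q_closure_neq_UNIV[OF assms] subspace_q_closure[OF assms(1,2)]
      vec.dim_psubset[of "q_closure \<rho> y" UNIV]
    by (auto simp: card_cart_basis)
  then show ?thesis
    using card_subspace[OF subspace_q_closure[OF assms(1,2)]] two_le_card_field[where 'a='a]
    by (simp add: power_increasing)
qed

lemma q_independent_span_insert:
  assumes "q_matroid \<rho>" "q_independent \<rho> y" "v \<notin> q_closure \<rho> y"
  shows "q_independent \<rho> (vec.span (insert v y))" "y \<in> line_complements v (vec.span (insert v y))"
proof -
  have y: "vec.subspace y" "\<rho> y = vec.dim y" using assms(2) by (auto simp: q_independent_def)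
  have "v \<notin> y"
    using assms(3) subset_q_closure[OF y(1)] by blast
  with y(1) show "y \<in> line_complements v (vec.span (insert v y))"
    using span_insert_eq_iff_line_complement[of "vec.span (insert v y)" v y]
    by (simp add: vec.span_base)
  with y(1) \<open>v \<notin> y\<close> have "vec.dim (vec.span (insert v y)) = Suc (vec.dim y)"
    by (simp add: line_complements_def)
  then show "q_independent \<rho> (vec.span (insert v y))"
    using assms(3) y q_matroid_rank_le_dim[OF assms(1), of "vec.span (insert v y)"]
    by (simp add: q_independent_def q_closure_def)
qed

definition indep_count :: "(('a::{finite,field}^'n) set \<Rightarrow> nat) \<Rightarrow> nat \<Rightarrow> nat" where
  "indep_count \<rho> d = card {U. q_independent \<rho> U \<and> vec.dim U = d}"

lemma card_Compl_q_closure_ge: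
  fixes \<rho> :: "('a::{finite,field}^'n) set \<Rightarrow> nat"
  assumes "q_matroid \<rho>" "vec.subspace y" "\<rho> y < \<rho> UNIV"
  shows "CARD('a) ^ CARD('n) - CARD('a) ^ (CARD('n) - 1) \<le> card (- q_closure \<rho> y)"
proof -
  have "card (UNIV :: ('a^'n) set) = CARD('a) ^ CARD('n)"
    using card_subspace[of "UNIV :: ('a^'n) set"] by (simp add: card_cart_basis)
  then show ?thesis
    using card_q_closure_le[OF assms] by (simp add: Compl_eq_Diff_UNIV card_Diff_subset)
qed

lemma indep_count_growth:
  fixes \<rho> :: "('a::{finite,field}^'n) set \<Rightarrow> nat"
  assumes "q_matroid \<rho>" "Suc k \<le> \<rho> UNIV"
  shows "indep_count \<rho> k * (CARD('a) ^ CARD('n) - CARD('a) ^ (CARD('n) - 1))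
    \<le> indep_count \<rho> (Suc k) * ((CARD('a) ^ Suc k - 1) * CARD('a) ^ k)"
proof -
  define I where "I d = {U. q_independent \<rho> U \<and> vec.dim U = d}" for d
  define complement_pairs where
    "complement_pairs x = (SIGMA v:x - {0}. line_complements v x)" for x :: "('a^'n) set"
  let ?extensions = "SIGMA y:I k. - q_closure \<rho> y"
  have "indep_count \<rho> k * (CARD('a) ^ CARD('n) - CARD('a) ^ (CARD('n) - 1))
      \<le> (\<Sum>y\<in>I k. card (- q_closure \<rho> y))"
    unfolding indep_count_def I_def using card_Compl_q_closure_ge[OF assms(1)] assms(2)
    by (intro sum_bounded_below[where 'a=nat, simplified]) (auto simp: q_independent_def)
  also have "\<dots> = card ?extensions" by (simp add: card_SigmaI)
  also have "\<dots> \<le> card (\<Union>x\<in>I (Suc k). complement_pairs x)"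
  proof (rule card_inj_on_le[where f = "\<lambda>(y, v). (v, y)"])
    show "(\<lambda>(y, v). (v, y)) ` ?extensions \<subseteq> (\<Union>x\<in>I (Suc k). complement_pairs x)"
    proof clarify
      fix y v assume y: "y \<in> I k" and v: "v \<notin> q_closure \<rho> y"
      let ?x = "vec.span (insert v y)"
      have "q_independent \<rho> y" using y by (simp add: I_def)
      note extension = q_independent_span_insert[OF assms(1) this v]
      then have "?x \<in> I (Suc k)"
        using y by (auto simp: I_def line_complements_def)
      moreover note extension(2)
      moreover have "v \<noteq> 0"
        using y v subset_q_closure[of y \<rho>] vec.subspace_0[of y]
        by (auto simp: I_def q_independent_def)
      then have "v \<in> ?x - {0}" by (simp add: vec.span_base)
      ultimately show "(v, y) \<in> (\<Union>x\<in>I (Suc k). complement_pairs x)"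
        unfolding complement_pairs_def by blast
    qed
  qed (auto simp: inj_on_def)
  also have "\<dots> \<le> (\<Sum>x\<in>I (Suc k). card (complement_pairs x))"
    by (rule card_UN_le) simp
  also have "\<dots> = (\<Sum>x\<in>I (Suc k). (CARD('a) ^ Suc k - 1) * CARD('a) ^ k)"
    using card_line_complement_pairs[where 'a='a and 'n='n]
    by (intro sum.cong) (auto simp: I_def complement_pairs_def q_independent_def)
  also have "\<dots> = indep_count \<rho> (Suc k) * ((CARD('a) ^ Suc k - 1) * CARD('a) ^ k)"
    by (simp add: indep_count_def I_def)
  finally show ?thesis .
qed

lemma power_Suc_minus_one_less:
  fixes q :: nat
  assumes "2 \<le> q" and "Suc k < n"
  shows "q ^ Suc k - 1 < q ^ n - q ^ (n - 1)"
proof -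
  obtain m where m: "n = Suc m" using assms(2) by (cases n) auto
  have "q ^ Suc k \<le> q ^ m" using assms m by (intro power_increasing) auto
  moreover have "2 * q ^ m \<le> q ^ n" using assms(1) m by simp
  moreover have "0 < q ^ Suc k" using assms(1) by simp
  moreover have "q ^ (n - 1) = q ^ m" using m by simp
  ultimately show ?thesis by linarith
qed

lemma weighted_indep_count_less:
  fixes \<rho> :: "('a::{finite,field}^'n) set \<Rightarrow> nat"
  assumes "q_matroid \<rho>" "\<rho> UNIV < CARD('n)" "k < \<rho> UNIV" "0 < indep_count \<rho> k"
  shows "CARD('a) ^ (k choose 2) * indep_count \<rho> k
    < CARD('a) ^ (Suc k choose 2) * indep_count \<rho> (Suc k)"
proof -
  let ?q = "CARD('a)" and ?n = "CARD('n)"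
  let ?a = "?q ^ (k choose 2) * indep_count \<rho> k"
  have "?a * (?q ^ Suc k - 1) < ?a * (?q ^ ?n - ?q ^ (?n - 1))"
    using power_Suc_minus_one_less[OF two_le_card_field, of k ?n] assms(2-4) by simp
  also have "\<dots> \<le> ?q ^ (k choose 2) * (indep_count \<rho> (Suc k) * ((?q ^ Suc k - 1) * ?q ^ k))"
    using indep_count_growth[OF assms(1), of k] assms(3) by (simp add: mult.assoc)
  also have "\<dots> = ?q ^ (Suc k choose 2) * indep_count \<rho> (Suc k) * (?q ^ Suc k - 1)"
    by (simp add: numeral_2_eq_2 power_add algebra_simps)
  finally show ?thesis by simp
qed

section \<open>The Euler characteristic of the independence complex\<close>

lemma euler_char_eq_signed_chain_count:
  fixes \<rho> :: "('a::{finite,field}^'n) set \<Rightarrow> nat"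
  shows "euler_char \<rho> = - signed_chain_count {U. q_independent \<rho> U \<and> U \<noteq> {0}}"
proof -
  let ?P = "{U. q_independent \<rho> U \<and> U \<noteq> {0}}"
  let ?N = "card (qsubspaces :: ('a^'n) set set)"
  have chains: "indep_chains \<rho> = chains ?P"
    by (simp add: indep_chains_def chains_def chain_subset_def)
  have "card C \<le> ?N" if "C \<in> chains ?P" for C
    using that by (intro card_mono) (auto simp: chains_def qsubspaces_def q_independent_def)
  then have "signed_chain_count ?P = (\<Sum>k\<in>{0..?N}. \<Sum>C\<in>{C \<in> chains ?P. card C = k}. (-1) ^ card C)"
    unfolding signed_chain_count_def by (intro sum.group[symmetric]) auto
  also have "\<dots> = (\<Sum>k\<in>{0..?N}. (-1) ^ k * int (face_count \<rho> k))"
    by (intro sum.cong) (simp_all add: face_count_def chains)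
  finally show ?thesis by (simp add: euler_char_def sum_negf)
qed

lemma euler_char_eq_mobius_sum:
  assumes "q_matroid \<rho>"
  shows "euler_char \<rho> = - (\<Sum>U\<in>{U. q_independent \<rho> U}. subspace_mobius U)"
proof -
  let ?P = "{U. q_independent \<rho> U \<and> U \<noteq> {0}}"
  have "q_independent \<rho> {0}"
    using q_matroid_rank_le_dim[OF assms, of "{0}"] by (simp add: q_independent_def)
  then have "insert {0} ?P = {U. q_independent \<rho> U}" by auto
  moreover have "signed_chain_count ?P = (\<Sum>U\<in>insert {0} ?P. subspace_mobius U)"
  proof (rule signed_chain_count_down_closed)
    show "?P \<subseteq> {y \<in> Collect vec.subspace. {0} \<subset> y}"
      using vec.subspace_0 by (auto simp: q_independent_def)
    show "y \<in> ?P" if "x \<in> ?P" "y \<in> Collect vec.subspace" "{0} \<subset> y" "y \<subset> x" for x y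
      using that q_independent_subspace[OF assms] by auto
  qed simp
  ultimately show ?thesis by (simp add: euler_char_eq_signed_chain_count)
qed

lemma euler_char_uniform:
  fixes \<rho> :: "('a::{finite,field}^'n) set \<Rightarrow> nat"
  assumes "q_matroid \<rho>" "uniform_full \<rho>"
  shows "euler_char \<rho> = 0"
proof -
  have "{U. q_independent \<rho> U} = {y \<in> Collect vec.subspace. {0} \<subseteq> y \<and> y \<subseteq> UNIV}"
    using assms(2) vec.subspace_0 by (auto simp: uniform_full_def q_independent_def)
  moreover have "(1 :: 'a^'n) \<noteq> 0" by (simp add: vec_eq_iff)
  then have "{0} \<subset> (UNIV :: ('a^'n) set)" by blast
  ultimately show ?thesis
    using mobius_interval_sum[of "Collect vec.subspace :: ('a^'n) set set" "{0}" UNIV]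
    by (simp add: euler_char_eq_mobius_sum[OF assms(1)] vec.subspace_UNIV)
qed

lemma alternating_sum_pos:
  fixes a :: "nat \<Rightarrow> 'a::linordered_idom"
  assumes "0 < a 0" and "\<And>d. d < r \<Longrightarrow> a d < a (Suc d)"
  shows "0 < (-1) ^ r * (\<Sum>d\<le>r. (-1) ^ d * a d)"
proof -
  have "0 < (-1) ^ m * (\<Sum>d\<le>m. (-1) ^ d * a d) \<and> (-1) ^ m * (\<Sum>d\<le>m. (-1) ^ d * a d) \<le> a m"
    if "m \<le> r" for m
    using that
  proof (induction m)
    case 0
    then show ?case using assms(1) by simp
  next
    case (Suc m)
    have "(-1) ^ Suc m * (\<Sum>d\<le>Suc m. (-1) ^ d * a d)
        = a (Suc m) - (-1) ^ m * (\<Sum>d\<le>m. (-1) ^ d * a d)"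
      by (simp add: algebra_simps flip: power_add mult_2)
    then show ?case using Suc assms(2)[of m] by auto
  qed
  then show ?thesis by simp
qed

lemma sum_independent_q_mobius:
  fixes \<rho> :: "('a::{finite,field}^'n) set \<Rightarrow> nat"
  assumes "q_matroid \<rho>"
  shows "(\<Sum>U\<in>{U. q_independent \<rho> U}. q_mobius q (vec.dim U))
    = (\<Sum>d\<le>\<rho> UNIV. q_mobius q d * int (indep_count \<rho> d))"
proof -
  have "vec.dim U \<le> \<rho> UNIV" if "q_independent \<rho> U" for U
    using that q_matroid_rank_mono[OF assms, of U UNIV] by (simp add: q_independent_def)
  then have "(\<Sum>U\<in>{U. q_independent \<rho> U}. q_mobius q (vec.dim U))
      = (\<Sum>d\<le>\<rho> UNIV. \<Sum>U\<in>{U \<in> {U. q_independent \<rho> U}. vec.dim U = d}. q_mobius q (vec.dim U))"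
    by (intro sum.group[symmetric]) auto
  also have "\<dots> = (\<Sum>d\<le>\<rho> UNIV. q_mobius q d * int (indep_count \<rho> d))"
    by (intro sum.cong) (simp_all add: indep_count_def)
  finally show ?thesis .
qed

lemma euler_char_nonuniform:
  fixes \<rho> :: "('a::{finite,field}^'n) set \<Rightarrow> nat"
  assumes "q_matroid \<rho>" "\<not> uniform_full \<rho>"
  shows "euler_char \<rho> \<noteq> 0"
proof -
  let ?r = "\<rho> UNIV"
  define a where "a d = int (CARD('a) ^ (d choose 2) * indep_count \<rho> d)" for d
  have r: "?r < CARD('n)"
    using assms uniform_full_iff_rank_UNIV[OF assms(1)]
      q_matroid_rank_le_dim[OF assms(1) vec.subspace_UNIV]
    by (simp add: le_neq_implies_less card_cart_basis)
  have "{U. q_independent \<rho> U \<and> vec.dim U = 0} = {{0}}"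
    using q_matroid_rank_le_dim[OF assms(1), of "{0}"] vec.subspace_0
    by (auto simp: q_independent_def)
  then have a0: "a 0 = 1" by (simp add: a_def indep_count_def numeral_2_eq_2)
  have step: "a k < a (Suc k)" if "k < ?r" "0 < a k" for k
  proof -
    have "0 < indep_count \<rho> k" using that(2) by (auto simp: a_def zero_less_mult_iff)
    then show ?thesis
      unfolding a_def of_nat_less_iff by (rule weighted_indep_count_less[OF assms(1) r that(1)])
  qed
  have pos: "0 < a k" if "k \<le> ?r" for k
    using that
  proof (induction k)
    case (Suc k)
    then show ?case using step[of k] by simp
  qed (simp add: a0)
  have "euler_char \<rho> = - (\<Sum>d\<le>?r. (-1) ^ d * a d)"
    using euler_char_eq_mobius_sum[OF assms(1)] sum_independent_q_mobius[OF assms(1)]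
    by (simp add: subspace_mobius_eq q_independent_def q_mobius_def a_def mult.assoc)
  moreover have "0 < (-1) ^ ?r * (\<Sum>d\<le>?r. (-1) ^ d * a d)"
    using a0 step pos by (intro alternating_sum_pos) auto
  ultimately show ?thesis by auto
qed

theorem corollary5p11:
  fixes \<rho> :: "('a::{finite,field}^'n) set \<Rightarrow> nat"
  assumes "q_matroid \<rho>"
  shows "(uniform_full \<rho> \<longrightarrow> euler_char \<rho> = 0) \<and>
         (\<not> uniform_full \<rho> \<longrightarrow> euler_char \<rho> \<noteq> 0)"
  using euler_char_uniform[OF assms] euler_char_nonuniform[OF assms] by blast

end
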